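(* Let $C\ge 3$ and $2\le\ell<C$ be integers, and let $r_1=1$ and $r_2,\dots,r_\ell\in(0,1]$. For $1\le k\le\ell$ put $R_k=\sum_{i=1}^k r_i$ and define, for $\Pi\in(0,1/R_k]$, $$S_{F_k}(\Pi)=-\sum_{i=1}^k r_i\Pi\log_2(r_i\Pi)-(1-R_k\Pi)\log_2(1-R_k\Pi)+(1-R_k\Pi)\log_2(C-k)$$ (with $0\log_2 0=0$). Then: (i) $S_{F_\ell}(\Pi)\le S_{F_{\ell-1}}(\Pi)$ for every $\Pi\in(0,1/R_\ell]$; (ii) if $S\in\mathbb R$, $\Pi_\ell\in(0,1/R_\ell]$ and $\Pi_{\ell-1}\in(0,1/R_{\ell-1}]$ satisfy $S_{F_\ell}(\Pi_\ell)=S=S_{F_{\ell-1}}(\Pi_{\ell-1})$, and $S_{F_{\ell-1}}$ is strictly decreasing on a subinterval of $(0,1/R_{\ell-1}]$ containing both $\Pi_\ell$ and $\Pi_{\ell-1}$, then $\Pi_{\ell-1}\ge\Pi_\ell$. Consequently, under these monotonicity hypotheses for each $k$, the bounds satisfy $\Pi^{\max}_{1,1}\ge\Pi^{\max}_{1,2}\ge\cdots\ge\Pi^{\max}_{1,\ell}$, where $\Pi^{\max}_{1,k}$ denotes the solution of $S_{F_k}(\Pi)=S$.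
   Context: $S_{F_k}(\Pi)$ is the Shannon entropy (in bits) of the probability vector on $C$ outcomes consisting of the $k$ masses $r_1\Pi,\dots,r_k\Pi$ (the top-$k$ candidates, with $r_i$ the ratio of the $i$-th candidate's probability to the largest one, $\Pi$) followed by $C-k$ equal masses $(1-R_k\Pi)/(C-k)$. $\Pi^{\max}_{1,k}$ is the top-1 predictability upper bound obtained from the top-$k$-aware Fano scaling for an estimated entropy value $S$; $\Pi^{\max}_{1,1}$ is the classical Fano bound. *)

theory Defs
  imports Complex_Main
begin

definition plog2 :: "real \<Rightarrow> real" where
  "plog2 x = (if x = 0 then 0 else x * log 2 x)"

definition Rsum :: "(nat \<Rightarrow> real) \<Rightarrow> nat \<Rightarrow> real" where
  "Rsum r k = (\<Sum>i=1..k. r i)"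

definition SF :: "nat \<Rightarrow> (nat \<Rightarrow> real) \<Rightarrow> nat \<Rightarrow> real \<Rightarrow> real" where
  "SF C r k P = - (\<Sum>i=1..k. plog2 (r i * P)) - plog2 (1 - Rsum r k * P)
      + (1 - Rsum r k * P) * log 2 (real (C - k))"

definition strict_decr_on :: "real set \<Rightarrow> (real \<Rightarrow> real) \<Rightarrow> bool" where
  "strict_decr_on I f \<longleftrightarrow> (\<forall>x\<in>I. \<forall>y\<in>I. x < y \<longrightarrow> f y < f x)"

end

theory Submission
  imports Defs
begin

text \<open>Passing from k to k + 1 candidates splits the mass r(k+1) P off the uniform tail, which
  was spread over C - k outcomes, and leaves the rest spread over the remaining C - k - 1.
  By the log-sum inequality such a split cannot increase the entropy, so S_F(k+1) <= S_F(k)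
  pointwise. Hence S_F(k) >= S at the solution of S_F(k+1) = S, and as S_F(k) is decreasing
  it reaches the level S only to the right of that solution.\<close>

lemma log_sum_inequality_two:
  fixes m x n :: real
  assumes "0 < m" "0 < x" "0 < n"
  shows "(m + x) * ln ((m + x) / (n + 1)) \<le> m * ln (m / n) + x * ln x"
proof -
  define s where "s = m + x"
  have "0 < s" "0 < n + 1" using assms by (simp_all add: s_def)
  \<comment> \<open>Gibbs: \<open>ln y \<le> y - 1\<close> at the ratios of the merged to the separate weights\<close>
  have "m * ln (n * s / ((n + 1) * m)) + x * ln (s / ((n + 1) * x))
      \<le> m * (n * s / ((n + 1) * m) - 1) + x * (s / ((n + 1) * x) - 1)"
    using assms \<open>0 < s\<close> by (intro add_mono mult_left_mono ln_le_minus_one) auto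
  also have "\<dots> = 0"
  proof -
    have "(n + 1) * m \<noteq> 0" "(n + 1) * x \<noteq> 0" using assms by auto
    then show ?thesis by (simp add: s_def field_simps)
  qed
  finally have "m * (ln n + ln s - ln (n + 1) - ln m) + x * (ln s - ln (n + 1) - ln x) \<le> 0"
    using assms \<open>0 < s\<close> by (simp add: ln_mult ln_div diff_diff_eq)
  then show ?thesis
    using assms \<open>0 < s\<close> by (simp add: ln_div s_def[symmetric]) (simp add: s_def algebra_simps)
qed

lemma plog2_merge_le:
  fixes m x n :: real
  assumes "0 \<le> m" "0 < x" "0 < n"
  shows "plog2 (m + x) - (m + x) * log 2 (n + 1) \<le> plog2 m + plog2 x - m * log 2 n"
proof (cases "m = 0")
  case True
  then show ?thesis using assms by (simp add: plog2_def)
next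
  case False
  then have "0 < m" using assms by simp
  have "(m + x) * (ln (m + x) - ln (n + 1)) \<le> m * (ln m - ln n) + x * ln x"
    using log_sum_inequality_two[OF \<open>0 < m\<close> assms(2,3)] \<open>0 < m\<close> assms
    by (simp add: ln_div)
  then have "(m + x) * (ln (m + x) - ln (n + 1)) / ln 2 \<le> (m * (ln m - ln n) + x * ln x) / ln 2"
    by (simp add: divide_right_mono)
  then show ?thesis
    using \<open>0 < m\<close> assms
    by (simp add: plog2_def log_def diff_divide_distrib add_divide_distrib algebra_simps)
qed

lemma Rsum_Suc: "Rsum r (Suc k) = Rsum r k + r (Suc k)"
  by (simp add: Rsum_def)

lemma Rsum_pos:
  assumes "0 < k" "\<And>i. 1 \<le> i \<Longrightarrow> i \<le> k \<Longrightarrow> 0 < r i"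
  shows "0 < Rsum r k"
  unfolding Rsum_def using assms by (intro sum_pos) auto

lemma SF_Suc_le:
  assumes "Suc k < C" "0 < r (Suc k)" "0 < P" "Rsum r (Suc k) * P \<le> 1"
  shows "SF C r (Suc k) P \<le> SF C r k P"
proof -
  have "plog2 (1 - Rsum r k * P) - (1 - Rsum r k * P) * log 2 (real (C - k))
      \<le> plog2 (1 - Rsum r (Suc k) * P) + plog2 (r (Suc k) * P)
        - (1 - Rsum r (Suc k) * P) * log 2 (real (C - Suc k))"
    using plog2_merge_le[of "1 - Rsum r (Suc k) * P" "r (Suc k) * P" "real (C - Suc k)"] assms
    by (simp add: Rsum_Suc Suc_diff_Suc algebra_simps)
  then show ?thesis
    by (simp add: SF_def)
qed

lemma strict_decr_on_imp_le:
  assumes "strict_decr_on I f" "x \<in> I" "y \<in> I" "f y \<le> f x"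
  shows "x \<le> y"
  using assms unfolding strict_decr_on_def by (meson less_le_not_le linorder_not_le)

theorem mainTheorem4:
  fixes C l :: nat and r :: "nat \<Rightarrow> real"
  assumes "C \<ge> 3" and "2 \<le> l" and "l < C"
    and "r 1 = 1"
    and "\<And>i. 2 \<le> i \<Longrightarrow> i \<le> l \<Longrightarrow> 0 < r i \<and> r i \<le> 1"
  shows
    "(\<forall>P\<in>{0<..1 / Rsum r l}. SF C r l P \<le> SF C r (l - 1) P)
     \<and> (\<forall>S Pl Pl1 a b.
          Pl \<in> {0<..1 / Rsum r l} \<and> Pl1 \<in> {0<..1 / Rsum r (l - 1)}
          \<and> SF C r l Pl = S \<and> SF C r (l - 1) Pl1 = S
          \<and> {a..b} \<subseteq> {0<..1 / Rsum r (l - 1)} \<and> Pl \<in> {a..b} \<and> Pl1 \<in> {a..b}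
          \<and> strict_decr_on {a..b} (SF C r (l - 1))
          \<longrightarrow> Pl1 \<ge> Pl)
     \<and> (\<forall>S (Pmax :: nat \<Rightarrow> real).
          (\<forall>k\<in>{1..l}. Pmax k \<in> {0<..1 / Rsum r k} \<and> SF C r k (Pmax k) = S)
          \<and> (\<forall>k\<in>{2..l}. \<exists>a b. {a..b} \<subseteq> {0<..1 / Rsum r (k - 1)}
                \<and> Pmax k \<in> {a..b} \<and> Pmax (k - 1) \<in> {a..b}
                \<and> strict_decr_on {a..b} (SF C r (k - 1)))
          \<longrightarrow> (\<forall>k\<in>{2..l}. Pmax k \<le> Pmax (k - 1)))"
proof -
  have r_pos: "0 < r i" if "1 \<le> i" "i \<le> l" for i
    using that assms(4) assms(5)[of i] by (cases "i = 1") auto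
  have SF_step: "SF C r k P \<le> SF C r (k - 1) P"
    if k: "k \<in> {2..l}" and P: "P \<in> {0<..1 / Rsum r k}" for k P
  proof -
    have "0 < Rsum r k"
      using k r_pos by (intro Rsum_pos) auto
    then have "Rsum r k * P \<le> 1"
      using P by (simp add: field_simps)
    moreover obtain j where "k = Suc j"
      using k by (cases k) auto
    ultimately show ?thesis
      using SF_Suc_le[of j C r P] k P assms(3) r_pos by auto
  qed
  have level_crossing_le: "P \<le> P'"
    if "k \<in> {2..l}" "P \<in> {0<..1 / Rsum r k}" "SF C r (k - 1) P' = SF C r k P"
       "strict_decr_on I (SF C r (k - 1))" "P \<in> I" "P' \<in> I" for k P P' I
    using strict_decr_on_imp_le[OF that(4-6)] SF_step[OF that(1,2)] that(3) by linarith
  show ?thesis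
    apply (intro conjI allI impI ballI)
    subgoal for P using SF_step assms(2) by simp
    subgoal for S Pl Pl1 a b using level_crossing_le[of l Pl Pl1 "{a..b}"] assms(2) by auto
    subgoal for S Pmax k using level_crossing_le[of k "Pmax k" "Pmax (k - 1)"] by fastforce
    done
qed

end
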